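(* Let $M_1=(Q_1,R_1,X_1,\delta_1)$ and $M_2=(Q_2,R_2,X_2,\delta_2)$ be rough finite state machines and let $\omega:Q_2\times X_2\to X_1$ be a map. Then the cascade product is covered by the wreath product: $M_1\,\omega\,M_2\preceq M_1\circ M_2$.
   Context: For a finite set $Q$ with an equivalence relation $R$ and $A\subseteq Q$, $\underline{A}$ is the union of the $R$-classes contained in $A$ and $\overline{A}$ is the union of the $R$-classes meeting $A$. A rough finite state machine (RFSM) is $M=(Q,R,X,\delta)$ with $Q$ a nonempty finite state set, $R$ an equivalence relation on $Q$, $X$ a nonempty finite input set, and $\delta$ assigning to each $(q,a)\in Q\times X$ a pair $\delta(q,a)=(\underline{\delta(q,a)},\overline{\delta(q,a)})=(\underline{A},\overline{A})$ for some $A\subseteq Q$. $R_1\times R_2$ is the equivalence relation on $Q_1\times Q_2$ with $((p_1,p_2),(q_1,q_2))\in R_1\times R_2$ iff $(p_1,q_1)\in R_1$ and $(p_2,q_2)\in R_2$. Cascade product: $M_1\,\omega\,M_2=(Q_1\times Q_2,R_1\times R_2,X_2,\delta_1\omega\delta_2)$ where $(\delta_1\omega\delta_2)((q_1,q_2),x_2)$ has lower part $\underline{\delta_1(q_1,\omega(q_2,x_2))}\times\underline{\delta_2(q_2,x_2)}$ and upper part $\overline{\delta_1(q_1,\omega(q_2,x_2))}\times\overline{\delta_2(q_2,x_2)}$. Wreath product: $M_1\circ M_2=(Q_1\times Q_2,R_1\times R_2,X_1^{Q_2}\times X_2,\delta_1\circ\delta_2)$, where $X_1^{Q_2}$ is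 the set of all maps $Q_2\to X_1$, and $(\delta_1\circ\delta_2)((q_1,q_2),(f,x))$ has lower part $\underline{\delta_1(q_1,f(q_2))}\times\underline{\delta_2(q_2,x)}$ and upper part $\overline{\delta_1(q_1,f(q_2))}\times\overline{\delta_2(q_2,x)}$. Covering: for RFSMs $N_1=(P_1,S_1,Y_1,\mu_1)$ and $N_2=(P_2,S_2,Y_2,\mu_2)$, a covering of $N_1$ by $N_2$ is a pair $(\eta,\xi)$ with $\eta:P_2\to P_1$ surjective and $\xi:Y_1\to Y_2$ a map (extended to words by $\xi(e)=e$, $\xi(y_1\cdots y_n)=\xi(y_1)\cdots\xi(y_n)$) such that (i) $(p,q)\in S_2\Rightarrow(\eta(p),\eta(q))\in S_1$ for all $p,q\in P_2$, and (ii) for all $p\in P_2$, $y\in Y_1$: $\underline{\mu_1(\eta(p),y)}\subseteq\eta(\underline{\mu_2(p,\xi(y))})$ and $\overline{\mu_1(\eta(p),y)}\subseteq\eta(\overline{\mu_2(p,\xi(y))})$. $N_1\preceq N_2$ means such a covering exists. *)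

theory Defs
  imports "HOL-Library.FuncSet"
begin

definition lower_appr :: "'q set \<Rightarrow> ('q \<times> 'q) set \<Rightarrow> 'q set \<Rightarrow> 'q set" where
  "lower_appr Q R A = \<Union>{C \<in> Q // R. C \<subseteq> A}"

definition upper_appr :: "'q set \<Rightarrow> ('q \<times> 'q) set \<Rightarrow> 'q set \<Rightarrow> 'q set" where
  "upper_appr Q R A = \<Union>{C \<in> Q // R. C \<inter> A \<noteq> {}}"

type_synonym ('q, 'x) rfsm =
  "'q set \<times> ('q \<times> 'q) set \<times> 'x set \<times> ('q \<Rightarrow> 'x \<Rightarrow> 'q set \<times> 'q set)"

definition rfsm :: "('q, 'x) rfsm \<Rightarrow> bool" where
  "rfsm M = (case M of (Q, R, X, \<delta>) \<Rightarrow>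
     Q \<noteq> {} \<and> finite Q \<and> equiv Q R \<and> X \<noteq> {} \<and> finite X \<and>
     (\<forall>q\<in>Q. \<forall>a\<in>X. \<exists>A. A \<subseteq> Q \<and> \<delta> q a = (lower_appr Q R A, upper_appr Q R A)))"

definition prod_rel :: "('a \<times> 'a) set \<Rightarrow> ('b \<times> 'b) set \<Rightarrow> (('a \<times> 'b) \<times> ('a \<times> 'b)) set" where
  "prod_rel R1 R2 = {((p1, p2), (q1, q2)). (p1, q1) \<in> R1 \<and> (p2, q2) \<in> R2}"

definition cascade ::
  "('q1, 'x1) rfsm \<Rightarrow> ('q2 \<Rightarrow> 'x2 \<Rightarrow> 'x1) \<Rightarrow> ('q2, 'x2) rfsm \<Rightarrow> ('q1 \<times> 'q2, 'x2) rfsm" where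
  "cascade M1 \<omega> M2 = (case M1 of (Q1, R1, X1, \<delta>1) \<Rightarrow> case M2 of (Q2, R2, X2, \<delta>2) \<Rightarrow>
     (Q1 \<times> Q2, prod_rel R1 R2, X2,
      \<lambda>(q1, q2) x2. (fst (\<delta>1 q1 (\<omega> q2 x2)) \<times> fst (\<delta>2 q2 x2),
                     snd (\<delta>1 q1 (\<omega> q2 x2)) \<times> snd (\<delta>2 q2 x2))))"

definition wreath ::
  "('q1, 'x1) rfsm \<Rightarrow> ('q2, 'x2) rfsm \<Rightarrow> ('q1 \<times> 'q2, ('q2 \<Rightarrow> 'x1) \<times> 'x2) rfsm" where
  "wreath M1 M2 = (case M1 of (Q1, R1, X1, \<delta>1) \<Rightarrow> case M2 of (Q2, R2, X2, \<delta>2) \<Rightarrow>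
     (Q1 \<times> Q2, prod_rel R1 R2, (Q2 \<rightarrow>\<^sub>E X1) \<times> X2,
      \<lambda>(q1, q2) (f, x). (fst (\<delta>1 q1 (f q2)) \<times> fst (\<delta>2 q2 x),
                         snd (\<delta>1 q1 (f q2)) \<times> snd (\<delta>2 q2 x))))"

definition covering :: "('p1, 'y1) rfsm \<Rightarrow> ('p2, 'y2) rfsm \<Rightarrow> ('p2 \<Rightarrow> 'p1) \<Rightarrow> ('y1 \<Rightarrow> 'y2) \<Rightarrow> bool" where
  "covering N1 N2 \<eta> \<xi> = (case N1 of (P1, S1, Y1, \<mu>1) \<Rightarrow> case N2 of (P2, S2, Y2, \<mu>2) \<Rightarrow>
     \<eta> ` P2 = P1 \<and> (\<forall>y\<in>Y1. \<xi> y \<in> Y2) \<and>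
     (\<forall>p\<in>P2. \<forall>q\<in>P2. (p, q) \<in> S2 \<longrightarrow> (\<eta> p, \<eta> q) \<in> S1) \<and>
     (\<forall>p\<in>P2. \<forall>y\<in>Y1. fst (\<mu>1 (\<eta> p) y) \<subseteq> \<eta> ` fst (\<mu>2 p (\<xi> y)) \<and>
                      snd (\<mu>1 (\<eta> p) y) \<subseteq> \<eta> ` snd (\<mu>2 p (\<xi> y))))"

definition covered_by :: "('p1, 'y1) rfsm \<Rightarrow> ('p2, 'y2) rfsm \<Rightarrow> bool" (infix "\<preceq>\<^sub>R" 50) where
  "N1 \<preceq>\<^sub>R N2 = (\<exists>\<eta> \<xi>. covering N1 N2 \<eta> \<xi>)"

end

theory Submission
  imports Defs
begin

text \<open>The wreath product simulates the cascade product with the identity on states: an input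
  x of the cascade is sent to the pair consisting of the map q \<mapsto> \<omega> q x (restricted to Q2) and
  x itself, so both machines perform literally the same transitions. Hence no property of the
  component machines beyond \<omega> landing in X1 is needed.\<close>

lemma cascade_covering_wreath:
  assumes "\<forall>q\<in>Q2. \<forall>x\<in>X2. \<omega> q x \<in> X1"
  shows "covering (cascade (Q1, R1, X1, \<delta>1) \<omega> (Q2, R2, X2, \<delta>2))
           (wreath (Q1, R1, X1, \<delta>1) (Q2, R2, X2, \<delta>2)) id (\<lambda>x. (\<lambda>q\<in>Q2. \<omega> q x, x))"
proof -
  have "(\<lambda>q\<in>Q2. \<omega> q x, x) \<in> (Q2 \<rightarrow>\<^sub>E X1) \<times> X2" if "x \<in> X2" for x
    using assms that by auto
  then show ?thesis
    unfolding covering_def cascade_def wreath_def by auto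
qed

theorem proposition3p3:
  fixes Q1 :: "'q1 set" and R1 X1 \<delta>1 and Q2 :: "'q2 set" and R2 X2 \<delta>2
    and \<omega> :: "'q2 \<Rightarrow> 'x2 \<Rightarrow> 'x1"
  assumes "rfsm (Q1, R1, X1, \<delta>1)" and "rfsm (Q2, R2, X2, \<delta>2)"
    and "\<forall>q\<in>Q2. \<forall>x\<in>X2. \<omega> q x \<in> X1"
  shows "cascade (Q1, R1, X1, \<delta>1) \<omega> (Q2, R2, X2, \<delta>2) \<preceq>\<^sub>R wreath (Q1, R1, X1, \<delta>1) (Q2, R2, X2, \<delta>2)"
  using cascade_covering_wreath[OF assms(3)] unfolding covered_by_def by blast

end
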